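(* (1) If a nonzero element of $T_n\cap\mathbb{Q}[\boldsymbol{\theta}_n]$ is antisymmetric, then it has degree exactly $n-1$. (2) If a nonzero element of $T_n\cap\mathbb{Q}[\boldsymbol{\theta}_n,\boldsymbol{\xi}_n]$ is antisymmetric, then it has degree exactly $n-1$.
   Context: Let $\mathbb{Q}[\boldsymbol{\theta}_n,\boldsymbol{\xi}_n,\boldsymbol{\rho}_n]$ be the $\mathbb{Q}$-algebra generated by $3n$ pairwise anticommuting variables $\theta_i,\xi_i,\rho_i$ ($1\le i\le n$), with $\mathfrak{S}_n$ acting by permuting indices simultaneously in all three sets; $\mathbb{Q}[\boldsymbol{\theta}_n]$ and $\mathbb{Q}[\boldsymbol{\theta}_n,\boldsymbol{\xi}_n]$ are the subalgebras generated by the $\theta$'s, resp. the $\theta$'s and $\xi$'s. An element $p$ is antisymmetric if $\sigma(p)=\mathrm{sgn}(\sigma)p$ for all $\sigma\in\mathfrak{S}_n$. Derivatives: for a variable $\alpha_j$, $\partial_{\alpha_j}(\alpha_{i_1}\cdots\alpha_{i_k})=(-1)^{\ell-1}\alpha_{i_1}\cdots\widehat{\alpha_{i_\ell}}\cdots\alpha_{i_k}$ if $\alpha_j$ is the $\ell$-th factor and $0$ otherwise. $T_n:=\{f:\sum_{i=1}^n\partial_{\theta_i}^h\partial_{\xi_i}^k\partial_{\rho_i}^\ell f=0\ \forall h,k,\ell\ge0,\ h+k+\ell>0\}$. Degree means total degree in the variables. *)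

theory Defs
  imports Complex_Main "HOL-Library.Product_Lexorder" "HOL-Combinatorics.Permutations"
begin

text \<open>Variables: (0,i) = theta_i, (1,i) = xi_i, (2,i) = rho_i, for 1 <= i <= n. An element of the exterior
  algebra is represented by its coefficient function on monomials: a finite set S of
  variables stands for the product of its elements in increasing order.\<close>

type_synonym var = "nat \<times> nat"
type_synonym ext = "var set \<Rightarrow> rat"

definition vars :: "nat set \<Rightarrow> nat \<Rightarrow> var set" where
  "vars K n = K \<times> {1..n}"

definition in_alg :: "nat set \<Rightarrow> nat \<Rightarrow> ext \<Rightarrow> bool" where
  "in_alg K n f \<longleftrightarrow> (\<forall>S. f S \<noteq> 0 \<longrightarrow> S \<subseteq> vars K n)"

text \<open>Left derivative with respect to a variable a: on a monomial, if a is the l-th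
  factor, remove it with sign (-1)^(l-1).\<close>
definition pd :: "var \<Rightarrow> ext \<Rightarrow> ext" where
  "pd a f S = (if a \<in> S then 0
      else (-1) ^ card {b \<in> S. b < a} * f (insert a S))"

definition T_space :: "nat \<Rightarrow> ext set" where
  "T_space n = {f. \<forall>h k l. h + k + l > 0 \<longrightarrow>
      (\<forall>S. (\<Sum>i = 1..n. ((pd (0, i)) ^^ h) (((pd (1, i)) ^^ k) (((pd (2, i)) ^^ l) f)) S) = 0)}"

definition vmap :: "(nat \<Rightarrow> nat) \<Rightarrow> var \<Rightarrow> var" where
  "vmap \<sigma> v = (fst v, \<sigma> (snd v))"

definition ninv :: "(nat \<Rightarrow> nat) \<Rightarrow> var set \<Rightarrow> nat" where
  "ninv \<sigma> S = card {(a, b). a \<in> S \<and> b \<in> S \<and> a < b \<and> vmap \<sigma> b < vmap \<sigma> a}"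

text \<open>sigma(x_S) = (-1)^(inversions) x_{sigma S}, extended linearly.\<close>
definition act :: "(nat \<Rightarrow> nat) \<Rightarrow> ext \<Rightarrow> ext" where
  "act \<sigma> f T = (let S = vmap (inv \<sigma>) ` T in (-1) ^ ninv \<sigma> S * f S)"

definition antisymmetric :: "nat \<Rightarrow> ext \<Rightarrow> bool" where
  "antisymmetric n f \<longleftrightarrow>
     (\<forall>\<sigma>. \<sigma> permutes {1..n} \<longrightarrow> act \<sigma> f = (\<lambda>T. of_int (sign \<sigma>) * f T))"

definition degree_ext :: "ext \<Rightarrow> nat" where
  "degree_ext f = Max {card S | S. f S \<noteq> 0}"

end

theory Submission
  imports Defs
begin

text \<open>Write a monomial in \<open>\<theta>, \<xi>\<close> as \<open>\<theta>\<^sub>A \<xi>\<^sub>B\<close> with \<open>A, B \<subseteq> {1..n}\<close>; its degree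
  is \<open>n - |C| + |A \<inter> B|\<close> where \<open>C = {1..n} - (A \<union> B)\<close>. Applying a transposition \<open>(i j)\<close> to an
  antisymmetric \<open>f\<close> kills the coefficient when \<open>i, j \<in> C\<close> or \<open>i, j \<in> A \<inter> B\<close>, so
  \<open>|C|, |A \<inter> B| \<le> 1\<close>, and the degree is \<open>n - 1\<close> unless \<open>C = {}\<close> or \<open>A \<inter> B \<noteq> {}\<close>.
  These remaining coefficients are killed by the equations \<open>\<Sum>\<^sub>i \<partial>\<theta>\<^sub>i f = 0\<close>,
  \<open>\<Sum>\<^sub>i \<partial>\<xi>\<^sub>i f = 0\<close> and \<open>\<Sum>\<^sub>i \<partial>\<theta>\<^sub>i \<partial>\<xi>\<^sub>i f = 0\<close> of \<open>T\<^sub>n\<close>, read off at suitable monomials: by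
  antisymmetry, all terms \<open>\<partial>\<theta>\<^sub>j f\<close> with \<open>\<xi>\<^sub>j\<close> present in the monomial coincide, and so do all terms
  \<open>\<partial>\<xi>\<^sub>j f\<close> with \<open>\<theta>\<^sub>j\<close> present, which leaves at most two distinct terms per equation.\<close>

definition tx_monomial :: "nat set \<Rightarrow> nat set \<Rightarrow> var set" where
  "tx_monomial A B = Pair 0 ` A \<union> Pair 1 ` B"

definition inversions :: "(nat \<Rightarrow> nat) \<Rightarrow> nat set \<Rightarrow> (nat \<times> nat) set" where
  "inversions \<sigma> X = {(x, y). x \<in> X \<and> y \<in> X \<and> x < y \<and> \<sigma> y < \<sigma> x}"

lemma card_image_Pair [simp]: "card (Pair a ` X) = card X"
  by (simp add: card_image inj_on_def)

lemma theta_mem_tx_monomial [simp]: "(0, x) \<in> tx_monomial A B \<longleftrightarrow> x \<in> A"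
  by (auto simp: tx_monomial_def)

lemma xi_mem_tx_monomial [simp]: "(Suc 0, x) \<in> tx_monomial A B \<longleftrightarrow> x \<in> B"
  by (auto simp: tx_monomial_def)

lemma card_tx_monomial:
  "finite A \<Longrightarrow> finite B \<Longrightarrow> card (tx_monomial A B) = card A + card B"
  unfolding tx_monomial_def by (subst card_Un_disjoint) auto

lemma tx_monomial_of_subset:
  assumes "S \<subseteq> vars {0, 1} n"
  shows "S = tx_monomial {i. (0, i) \<in> S} {i. (1, i) \<in> S}"
    and "{i. (0, i) \<in> S} \<subseteq> {1..n}" and "{i. (1, i) \<in> S} \<subseteq> {1..n}"
  using assms by (auto simp: tx_monomial_def vars_def)

lemma pd_theta_tx_monomial:
  "pd (0, x) f (tx_monomial A B) =
     (if x \<in> A then 0 else (-1) ^ card {y \<in> A. y < x} * f (tx_monomial (insert x A) B))"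
proof -
  have "{v \<in> tx_monomial A B. v < (0, x)} = Pair 0 ` {y \<in> A. y < x}"
    by (auto simp: tx_monomial_def less_prod_def')
  moreover have "insert (0, x) (tx_monomial A B) = tx_monomial (insert x A) B"
    by (auto simp: tx_monomial_def)
  ultimately show ?thesis
    by (simp add: pd_def)
qed

lemma pd_xi_tx_monomial:
  assumes "finite A"
  shows "pd (Suc 0, x) f (tx_monomial A B) =
     (if x \<in> B then 0
      else (-1) ^ (card A + card {y \<in> B. y < x}) * f (tx_monomial A (insert x B)))"
proof -
  have "{v \<in> tx_monomial A B. v < (Suc 0, x)} = Pair 0 ` A \<union> Pair 1 ` {y \<in> B. y < x}"
    by (auto simp: tx_monomial_def less_prod_def')
  moreover have "card (Pair (0 :: nat) ` A \<union> Pair 1 ` {y \<in> B. y < x}) = card A + card {y \<in> B. y < x}"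
    using assms by (subst card_Un_disjoint) auto
  moreover have "insert (Suc 0, x) (tx_monomial A B) = tx_monomial A (insert x B)"
    by (auto simp: tx_monomial_def)
  ultimately show ?thesis
    by (simp add: pd_def)
qed

lemma ninv_tx_monomial:
  assumes "finite A" "finite B"
  shows "ninv \<sigma> (tx_monomial A B) = card (inversions \<sigma> A) + card (inversions \<sigma> B)"
proof -
  let ?lift = "\<lambda>k (x :: nat, y :: nat). ((k :: nat, x), (k, y))"
  have "{(a, b). a \<in> tx_monomial A B \<and> b \<in> tx_monomial A B \<and> a < b \<and> vmap \<sigma> b < vmap \<sigma> a}
      = ?lift 0 ` inversions \<sigma> A \<union> ?lift 1 ` inversions \<sigma> B"
    by (auto simp: inversions_def tx_monomial_def vmap_def less_prod_def' image_iff)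
  moreover have "finite (inversions \<sigma> X)" if "finite X" for X
    using finite_subset[of "inversions \<sigma> X" "X \<times> X"] that by (auto simp: inversions_def)
  then have "card (?lift 0 ` inversions \<sigma> A \<union> ?lift 1 ` inversions \<sigma> B)
      = card (?lift 0 ` inversions \<sigma> A) + card (?lift 1 ` inversions \<sigma> B)"
    using assms by (intro card_Un_disjoint) auto
  moreover have "card (?lift k ` X) = card X" for k X
    by (rule card_image) (auto simp: inj_on_def)
  ultimately show ?thesis
    unfolding ninv_def by presburger
qed

lemma card_inversions_transpose:
  assumes "i < j" "finite X"
  shows "card (inversions (transpose i j) X) =
     (if i \<in> X \<and> j \<in> X then 1 else 0)
     + ((if i \<in> X then 1 else 0) + (if j \<in> X then 1 else 0)) * card {x \<in> X. i < x \<and> x < j}"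
proof -
  let ?C = "{x \<in> X. i < x \<and> x < j}"
  let ?P = "if i \<in> X \<and> j \<in> X then {(i, j)} else {}"
  let ?L = "if i \<in> X then Pair i ` ?C else {}"
  let ?R = "if j \<in> X then (\<lambda>x. (x, j)) ` ?C else {}"
  have "inversions (transpose i j) X = ?P \<union> ?L \<union> ?R"
    using assms(1) by (auto simp: inversions_def transpose_def split: if_splits)
  moreover have "card (?P \<union> ?L) = card ?P + card ?L"
    by (rule card_Un_disjoint) (use assms in auto)
  moreover have "card (?P \<union> ?L \<union> ?R) = card (?P \<union> ?L) + card ?R"
    by (rule card_Un_disjoint) (use assms in auto)
  moreover have "card ?L = (if i \<in> X then card ?C else 0)" "card ?R = (if j \<in> X then card ?C else 0)"
    by (auto simp: card_image inj_on_def)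
  ultimately show ?thesis
    by simp
qed

lemma minus_one_power_card_less_split:
  fixes X :: "nat set"
  assumes "finite X" "i < j" "i \<notin> X"
  shows "(-1 :: 'a :: ring_1) ^ card {x \<in> X. x < j} =
     (-1) ^ card {x \<in> X. x < i} * (-1) ^ card {x \<in> X. i < x \<and> x < j}"
proof -
  have "{x \<in> X. x < j} = {x \<in> X. x < i} \<union> {x \<in> X. i < x \<and> x < j}"
    using assms by (auto simp: not_less le_less)
  then have "card {x \<in> X. x < j} = card {x \<in> X. x < i} + card {x \<in> X. i < x \<and> x < j}"
    using assms(1) by (simp add: card_Un_disjoint disjoint_iff)
  then show ?thesis
    by (simp add: power_add)
qed

lemma in_alg_mono: "K \<subseteq> L \<Longrightarrow> in_alg K n f \<Longrightarrow> in_alg L n f"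
  unfolding in_alg_def vars_def by blast

lemma T_spaceD:
  assumes "f \<in> T_space n" "0 < h + k + l"
  shows "(\<Sum>i = 1..n. ((pd (0, i)) ^^ h) (((pd (1, i)) ^^ k) (((pd (2, i)) ^^ l) f)) S) = 0"
proof -
  have "\<forall>h k l. 0 < h + k + l \<longrightarrow>
      (\<forall>S. (\<Sum>i = 1..n. ((pd (0, i)) ^^ h) (((pd (1, i)) ^^ k) (((pd (2, i)) ^^ l) f)) S) = 0)"
    using assms(1) unfolding T_space_def by (rule CollectD)
  from this[rule_format, OF assms(2)] show ?thesis .
qed

lemma T_space_derivative_sum:
  assumes "f \<in> T_space n" "k < 3"
  shows "(\<Sum>i \<in> {1..n} - {i. (k, i) \<in> S}. pd (k, i) f S) = 0"
proof -
  have "(\<Sum>i = 1..n. pd (k, i) f S) = 0"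
  proof -
    consider "k = 0" | "k = 1" | "k = 2"
      using assms(2) by linarith
    then show ?thesis
      using T_spaceD[OF assms(1), of 1 0 0 S] T_spaceD[OF assms(1), of 0 1 0 S]
        T_spaceD[OF assms(1), of 0 0 1 S]
      by cases simp_all
  qed
  moreover have "(\<Sum>i = 1..n. pd (k, i) f S) = (\<Sum>i \<in> {1..n} - {i. (k, i) \<in> S}. pd (k, i) f S)"
    by (rule sum.mono_neutral_right) (auto simp: pd_def)
  ultimately show ?thesis
    by simp
qed

lemma T_space_mixed_derivative_sum:
  "f \<in> T_space n \<Longrightarrow> (\<Sum>i = 1..n. pd (0, i) (pd (1, i) f) S) = 0"
  using T_spaceD[of f n 1 1 0 S] by simp

locale antisymmetric_elem =
  fixes n :: nat and f :: ext
  assumes antisymmetric: "antisymmetric n f"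
begin

abbreviation coeff :: "nat set \<Rightarrow> nat set \<Rightarrow> rat" where
  "coeff A B \<equiv> f (tx_monomial A B)"

lemma coeff_transpose:
  assumes "i < j" "i \<in> {1..n}" "j \<in> {1..n}" "finite A" "finite B"
  shows "coeff (transpose i j ` A) (transpose i j ` B) =
    - ((-1) ^ (card (inversions (transpose i j) A) + card (inversions (transpose i j) B)) * coeff A B)"
proof -
  let ?t = "transpose i j"
  have "act ?t f = (\<lambda>T. of_int (sign ?t) * f T)"
    using antisymmetric assms(2,3) unfolding antisymmetric_def by (simp add: permutes_swap_id)
  then have "act ?t f (tx_monomial (?t ` A) (?t ` B)) = - coeff (?t ` A) (?t ` B)"
    using assms(1) by (simp add: sign_swap_id)
  moreover have "vmap (inv ?t) ` tx_monomial (?t ` A) (?t ` B) = tx_monomial A B"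
    by (simp add: tx_monomial_def vmap_def image_Un image_image)
  ultimately show ?thesis
    unfolding act_def Let_def using assms(4,5) by (simp add: ninv_tx_monomial)
qed

lemma coeff_eq_0_if_two_missing:
  assumes "finite A" "finite B" "i \<noteq> j" "i \<in> {1..n} - (A \<union> B)" "j \<in> {1..n} - (A \<union> B)"
  shows "coeff A B = 0"
proof -
  obtain a b where ab: "a < b" "a \<in> {1..n} - (A \<union> B)" "b \<in> {1..n} - (A \<union> B)"
    using assms(3-5) by (metis linorder_neqE)
  then have "coeff A B = - coeff A B"
    using coeff_transpose[OF ab(1) _ _ assms(1,2)] assms(1,2) by (simp add: card_inversions_transpose)
  then show ?thesis
    by simp
qed

lemma coeff_eq_0_if_two_doubled:
  assumes "A \<subseteq> {1..n}" "finite B" "i \<noteq> j" "i \<in> A \<inter> B" "j \<in> A \<inter> B"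
  shows "coeff A B = 0"
proof -
  obtain a b where ab: "a < b" "a \<in> A \<inter> B" "b \<in> A \<inter> B"
    using assms(3-5) by (metis linorder_neqE)
  moreover have "a \<in> {1..n}" "b \<in> {1..n}"
    using ab assms(1) by auto
  moreover have "finite A"
    using assms(1) finite_subset by blast
  ultimately have "coeff A B = - coeff A B"
    using coeff_transpose[of a b A B] assms(1,2)
    by (auto simp: card_inversions_transpose power_add power_mult)
  then show ?thesis
    by simp
qed

lemma pd_theta_tx_monomial_eq:
  assumes "finite A" "B \<subseteq> {1..n}" "j \<in> B - A" "j' \<in> B - A"
  shows "pd (0, j) f (tx_monomial A B) = pd (0, j') f (tx_monomial A B)"
proof -
  have "pd (0, j) f (tx_monomial A B) = pd (0, j') f (tx_monomial A B)"
    if "j < j'" "j \<in> B - A" "j' \<in> B - A" for j j'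
  proof -
    let ?t = "transpose j j'" and ?c = "card {x \<in> A. j < x \<and> x < j'}"
    have "finite B"
      using assms(2) finite_subset by blast
    have "{x \<in> insert j A. j < x \<and> x < j'} = {x \<in> A. j < x \<and> x < j'}"
      by auto
    then have "card (inversions ?t (insert j A)) = ?c"
      "card (inversions ?t B) = 1 + 2 * card {x \<in> B. j < x \<and> x < j'}"
      using that assms(1) \<open>finite B\<close> by (simp_all add: card_inversions_transpose)
    moreover have "?t ` insert j A = insert j' A" "?t ` B = B"
      using that by auto
    ultimately have "coeff (insert j' A) B = (-1) ^ ?c * coeff (insert j A) B"
      using coeff_transpose[of j j' "insert j A" B] that assms(1,2) \<open>finite B\<close>
      by (simp add: power_add power_mult subset_iff)
    moreover have "(-1 :: rat) ^ card {x \<in> A. x < j'} = (-1) ^ card {x \<in> A. x < j} * (-1) ^ ?c"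
      using assms(1) that by (intro minus_one_power_card_less_split) auto
    ultimately show ?thesis
      using that by (simp add: pd_theta_tx_monomial)
  qed
  then show ?thesis
    using assms(3,4) by (metis linorder_neqE)
qed

lemma pd_xi_tx_monomial_eq:
  assumes "A \<subseteq> {1..n}" "finite B" "j \<in> A - B" "j' \<in> A - B"
  shows "pd (1, j) f (tx_monomial A B) = pd (1, j') f (tx_monomial A B)"
proof -
  have "finite A"
    using assms(1) finite_subset by blast
  have "pd (1, j) f (tx_monomial A B) = pd (1, j') f (tx_monomial A B)"
    if "j < j'" "j \<in> A - B" "j' \<in> A - B" for j j'
  proof -
    let ?t = "transpose j j'" and ?c = "card {x \<in> B. j < x \<and> x < j'}"
    have "{x \<in> insert j B. j < x \<and> x < j'} = {x \<in> B. j < x \<and> x < j'}"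
      by auto
    then have "card (inversions ?t (insert j B)) = ?c"
      "card (inversions ?t A) = 1 + 2 * card {x \<in> A. j < x \<and> x < j'}"
      using that assms(2) \<open>finite A\<close> by (simp_all add: card_inversions_transpose)
    moreover have "?t ` insert j B = insert j' B" "?t ` A = A"
      using that by auto
    ultimately have "coeff A (insert j' B) = (-1) ^ ?c * coeff A (insert j B)"
      using coeff_transpose[of j j' A "insert j B"] that assms(1,2) \<open>finite A\<close>
      by (simp add: power_add power_mult subset_iff)
    moreover have "(-1 :: rat) ^ card {x \<in> B. x < j'} = (-1) ^ card {x \<in> B. x < j} * (-1) ^ ?c"
      using assms(2) that by (intro minus_one_power_card_less_split) auto
    ultimately show ?thesis
      using that \<open>finite A\<close> by (simp add: pd_xi_tx_monomial power_add)
  qed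
  then show ?thesis
    using assms(3,4) by (metis linorder_neqE)
qed

lemma coeff_swap_less:
  assumes "finite A" "finite B" "z < w" "z \<in> {1..n} - (A \<union> B)" "w \<in> {1..n} - (A \<union> B)"
  shows "(-1) ^ card {x \<in> B. x < z} * (-1) ^ card {x \<in> B. x < w} * coeff (insert w A) (insert z B) =
    - ((-1) ^ card {x \<in> A. x < z} * (-1) ^ card {x \<in> A. x < w} * coeff (insert z A) (insert w B))"
proof -
  let ?t = "transpose z w"
  let ?cA = "card {x \<in> A. z < x \<and> x < w}" and ?cB = "card {x \<in> B. z < x \<and> x < w}"
  have "{x \<in> insert z A. z < x \<and> x < w} = {x \<in> A. z < x \<and> x < w}"
    "{x \<in> insert w B. z < x \<and> x < w} = {x \<in> B. z < x \<and> x < w}"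
    by auto
  then have "card (inversions ?t (insert z A)) = ?cA" "card (inversions ?t (insert w B)) = ?cB"
    using assms by (simp_all add: card_inversions_transpose)
  moreover have "?t ` insert z A = insert w A" "?t ` insert w B = insert z B"
    using assms by auto
  ultimately have "coeff (insert w A) (insert z B) =
      - ((-1) ^ (?cA + ?cB) * coeff (insert z A) (insert w B))"
    using coeff_transpose[of z w "insert z A" "insert w B"] assms by simp
  moreover have "(-1 :: rat) ^ card {x \<in> A. x < w} = (-1) ^ card {x \<in> A. x < z} * (-1) ^ ?cA"
    "(-1 :: rat) ^ card {x \<in> B. x < w} = (-1) ^ card {x \<in> B. x < z} * (-1) ^ ?cB"
    using assms by (intro minus_one_power_card_less_split; auto)+
  ultimately show ?thesis
    by (simp add: power_add)
qed

lemma coeff_swap: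
  assumes "finite A" "finite B" "z \<noteq> w" "z \<in> {1..n} - (A \<union> B)" "w \<in> {1..n} - (A \<union> B)"
  shows "(-1) ^ card {x \<in> B. x < z} * (-1) ^ card {x \<in> B. x < w} * coeff (insert w A) (insert z B) =
    - ((-1) ^ card {x \<in> A. x < z} * (-1) ^ card {x \<in> A. x < w} * coeff (insert z A) (insert w B))"
proof (cases "z < w")
  case True
  then show ?thesis
    using coeff_swap_less assms by blast
next
  case False
  let ?p = "(-1 :: rat) ^ card {x \<in> A. x < z} * (-1) ^ card {x \<in> A. x < w}"
  let ?q = "(-1 :: rat) ^ card {x \<in> B. x < z} * (-1) ^ card {x \<in> B. x < w}"
  have swap_back: "q * y = - (p * x)" if "q * x = - (p * y)" "p * p = 1" "q * q = 1" for x y p q :: rat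
    using that by algebra
  have "w < z"
    using False assms(3) by simp
  then have "?q * coeff (insert z A) (insert w B) = - (?p * coeff (insert w A) (insert z B))"
    using coeff_swap_less[OF assms(1,2) _ assms(5,4)] by (simp add: mult_ac)
  moreover have "?p * ?p = 1" "?q * ?q = 1"
    by (simp_all add: mult_ac)
  ultimately show ?thesis
    by (rule swap_back)
qed

end

locale antisymmetric_T_elem = antisymmetric_elem +
  assumes in_T_space: "f \<in> T_space n"
begin

lemma theta_equation:
  assumes "A \<subseteq> {1..n}" "B \<subseteq> {1..n}" "{1..n} - A = insert z B" "z \<notin> B" "w \<in> B"
  shows "of_nat (card B) * pd (0, w) f (tx_monomial A B) + pd (0, z) f (tx_monomial A B) = 0"
proof -
  have "finite A" "finite B"
    using assms(1,2) finite_subset by blast+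
  have "(\<Sum>i \<in> insert z B. pd (0, i) f (tx_monomial A B)) = 0"
    using T_space_derivative_sum[OF in_T_space, of 0 "tx_monomial A B"] assms(3) by simp
  moreover have "(\<Sum>i \<in> B. pd (0, i) f (tx_monomial A B)) = of_nat (card B) * pd (0, w) f (tx_monomial A B)"
  proof -
    have "pd (0, i) f (tx_monomial A B) = pd (0, w) f (tx_monomial A B)" if "i \<in> B" for i
      using pd_theta_tx_monomial_eq[OF \<open>finite A\<close> assms(2), of i w] that assms(3,5) by blast
    then show ?thesis
      by simp
  qed
  ultimately show ?thesis
    using \<open>finite B\<close> assms(4) by simp
qed

lemma xi_equation:
  assumes "A \<subseteq> {1..n}" "B \<subseteq> {1..n}" "{1..n} - B = insert z A" "z \<notin> A" "w \<in> A"
  shows "of_nat (card A) * pd (1, w) f (tx_monomial A B) + pd (1, z) f (tx_monomial A B) = 0"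
proof -
  have "finite A" "finite B"
    using assms(1,2) finite_subset by blast+
  have "(\<Sum>i \<in> insert z A. pd (1, i) f (tx_monomial A B)) = 0"
    using T_space_derivative_sum[OF in_T_space, of 1 "tx_monomial A B"] assms(3) by simp
  moreover have "(\<Sum>i \<in> A. pd (1, i) f (tx_monomial A B)) = of_nat (card A) * pd (1, w) f (tx_monomial A B)"
  proof -
    have "pd (1, i) f (tx_monomial A B) = pd (1, w) f (tx_monomial A B)" if "i \<in> A" for i
      using pd_xi_tx_monomial_eq[OF assms(1) \<open>finite B\<close>, of i w] that assms(3,5) by blast
    then show ?thesis
      by simp
  qed
  ultimately show ?thesis
    using \<open>finite A\<close> assms(4) by simp
qed

lemma coeff_eq_0_if_cover_one_doubled:
  assumes "A \<union> B = {1..n}" "A \<inter> B = {w}"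
  shows "coeff A B = 0"
proof -
  let ?S = "tx_monomial (A - {w}) (B - {w})"
  have "finite A" "finite B"
    using assms(1) by (metis finite_Un finite_atLeastAtMost)+
  have w: "w \<in> {1..n}" "insert w (A - {w}) = A" "insert w (B - {w}) = B"
    using assms by auto
  have "pd (0, i) (pd (1, i) f) ?S = 0" if "i \<in> {1..n} - {w}" for i
    using that assms by (auto simp: pd_def)
  then have "(\<Sum>i = 1..n. pd (0, i) (pd (1, i) f) ?S) = pd (0, w) (pd (1, w) f) ?S"
    using w(1) by (simp add: sum.remove)
  then have "pd (0, w) (pd (1, w) f) ?S = 0"
    using T_space_mixed_derivative_sum[OF in_T_space] by simp
  then show ?thesis
    using w \<open>finite A\<close> \<open>finite B\<close> by (simp add: pd_theta_tx_monomial pd_xi_tx_monomial)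
qed

lemma coeff_eq_0_if_one_missing_one_doubled:
  assumes "A \<subseteq> {1..n}" "B \<subseteq> {1..n}" "{1..n} - (A \<union> B) = {z}" "A \<inter> B = {w}"
  shows "coeff A B = 0"
proof -
  define A0 B0 where "A0 = A - {w}" and "B0 = B - {w}"
  have fin: "finite A" "finite B" "finite A0" "finite B0"
    using assms(1,2) finite_subset unfolding A0_def B0_def by blast+
  have zw: "z \<in> {1..n} - (A0 \<union> B0)" "w \<in> {1..n} - (A0 \<union> B0)" "z \<noteq> w"
    using assms unfolding A0_def B0_def by auto
  have AB: "A = insert w A0" "B = insert w B0"
    using assms(4) unfolding A0_def B0_def by auto
  let ?x = "coeff A B" and ?e1 = "coeff (insert z A0) B" and ?e2 = "coeff A (insert z B0)"
  let ?a = "(-1 :: rat) ^ card {y \<in> A0. y < w}" and ?b = "(-1 :: rat) ^ card {y \<in> A0. y < z}"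
  let ?c = "(-1 :: rat) ^ card {y \<in> B0. y < w}" and ?d = "(-1 :: rat) ^ card {y \<in> B0. y < z}"
  let ?s = "(-1 :: rat) ^ card A"
  txt \<open>The \<open>\<theta>\<close>- and the \<open>\<xi>\<close>-equation each tie \<open>?x\<close> to one further coefficient, and
    these two are related by swapping \<open>z\<close> and \<open>w\<close>; eliminating them leaves \<open>(|A| + |B|) ?x = 0\<close>.\<close>
  have "of_nat (card B) * pd (0, w) f (tx_monomial A0 B) + pd (0, z) f (tx_monomial A0 B) = 0"
    using assms zw AB by (intro theta_equation) auto
  then have theta: "of_nat (card B) * (?a * ?x) + ?b * ?e1 = 0"
    using zw AB by (simp add: pd_theta_tx_monomial)
  have "of_nat (card A) * pd (1, w) f (tx_monomial A B0) + pd (1, z) f (tx_monomial A B0) = 0"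
    using assms zw AB by (intro xi_equation) auto
  then have xi: "of_nat (card A) * (?s * ?c * ?x) + ?s * ?d * ?e2 = 0"
    using zw AB fin by (simp add: pd_xi_tx_monomial power_add)
  have swap: "?d * ?c * ?e2 = - (?b * ?a * ?e1)"
    using coeff_swap[OF fin(3,4) zw(3,1,2)] AB by simp
  have combine: "(k + m) * x = 0"
    if "m * (a * x) + b * e1 = 0" "k * (s * c * x) + s * d * e2 = 0" "d * c * e2 = - (b * a * e1)"
      "a * a = 1" "c * c = 1" "s * s = 1"
    for a b c d s m k x e1 e2 :: rat
    using that by algebra
  have "(of_nat (card A) + of_nat (card B)) * ?x = 0"
    by (rule combine[OF theta xi swap]) simp_all
  moreover have "card A + card B \<noteq> 0"
    using fin AB by simp
  ultimately show ?thesis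
    by simp
qed

lemma coeff_eq_0_if_partition:
  assumes "1 \<le> n" "A \<union> B = {1..n}" "A \<inter> B = {}"
  shows "coeff A B = 0"
proof -
  have AB: "A \<subseteq> {1..n}" "B \<subseteq> {1..n}" "finite A" "finite B"
    using assms(2) by (auto intro: finite_subset)
  consider "B = {}" | "A = {}" | z w where "z \<in> A" "w \<in> B"
    by blast
  then show ?thesis
  proof cases
    case 1
    let ?S = "tx_monomial ({1..n} - {n}) {}"
    have "{1..n} - {i. (0, i) \<in> ?S} = {n}"
      using assms(1) by auto
    then have "pd (0, n) f ?S = 0"
      using T_space_derivative_sum[OF in_T_space, of 0 ?S] by simp
    moreover have "insert n ({1..n} - {n}) = A"
      using 1 assms(1,2) by auto
    ultimately show ?thesis
      using 1 by (simp add: pd_theta_tx_monomial)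
  next
    case 2
    let ?S = "tx_monomial {} ({1..n} - {n})"
    have "{1..n} - {i. (1, i) \<in> ?S} = {n}"
      using assms(1) by auto
    then have "pd (1, n) f ?S = 0"
      using T_space_derivative_sum[OF in_T_space, of 1 ?S] by simp
    moreover have "insert n ({1..n} - {n}) = B"
      using 2 assms(1,2) by auto
    ultimately show ?thesis
      using 2 by (simp add: pd_xi_tx_monomial)
  next
    case 3
    let ?S = "tx_monomial (A - {z}) B"
    have "of_nat (card B) * pd (0, w) f ?S + pd (0, z) f ?S = 0"
      using AB assms(2,3) 3 by (intro theta_equation) auto
    moreover have "coeff (insert w (A - {z})) B = 0"
      using AB assms(2,3) 3 by (intro coeff_eq_0_if_one_missing_one_doubled) auto
    moreover have "w \<notin> A"
      using 3 assms(3) by auto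
    ultimately have "pd (0, z) f ?S = 0"
      by (simp add: pd_theta_tx_monomial)
    then show ?thesis
      using 3 by (simp add: pd_theta_tx_monomial insert_absorb)
  qed
qed

lemma card_eq_if_coeff_nonzero:
  assumes "1 \<le> n" "A \<subseteq> {1..n}" "B \<subseteq> {1..n}" "coeff A B \<noteq> 0"
  shows "card A + card B = n - 1"
proof -
  define C where "C = {1..n} - (A \<union> B)"
  have fin: "finite A" "finite B"
    using assms(2,3) finite_subset by blast+
  have "\<forall>i \<in> C. \<forall>j \<in> C. i = j"
    using coeff_eq_0_if_two_missing[OF fin] assms(4) unfolding C_def by blast
  then have C_cases: "C = {} \<or> (\<exists>z. C = {z})"
    by blast
  have "\<forall>i \<in> A \<inter> B. \<forall>j \<in> A \<inter> B. i = j"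
    using coeff_eq_0_if_two_doubled[OF assms(2) fin(2)] assms(4) by blast
  then have doubled_cases: "A \<inter> B = {} \<or> (\<exists>w. A \<inter> B = {w})"
    by blast
  have "C \<noteq> {}"
  proof
    assume "C = {}"
    then have "A \<union> B = {1..n}"
      using assms(2,3) unfolding C_def by auto
    then show False
      using doubled_cases coeff_eq_0_if_partition coeff_eq_0_if_cover_one_doubled assms(1,4) by blast
  qed
  with C_cases obtain z where z: "C = {z}"
    by blast
  then have "A \<inter> B = {}"
    using doubled_cases coeff_eq_0_if_one_missing_one_doubled[OF assms(2,3)] assms(4)
    unfolding C_def by blast
  moreover have "card (A \<union> B) + card C = n"
    using assms(2,3) fin card_Diff_subset[of "A \<union> B" "{1..n}"] card_mono[of "{1..n}" "A \<union> B"]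
    unfolding C_def by simp
  ultimately show ?thesis
    using z card_Un_Int[OF fin] by simp
qed

lemma card_eq_if_nonzero:
  assumes "1 \<le> n" "in_alg {0, 1} n f" "f S \<noteq> 0"
  shows "card S = n - 1"
proof -
  let ?A = "{i. (0, i) \<in> S}" and ?B = "{i. (1, i) \<in> S}"
  have "S \<subseteq> vars {0, 1} n"
    using assms(2,3) unfolding in_alg_def by blast
  then have S: "S = tx_monomial ?A ?B" and A: "?A \<subseteq> {1..n}" and B: "?B \<subseteq> {1..n}"
    by (rule tx_monomial_of_subset)+
  have "card S = card ?A + card ?B"
    using card_tx_monomial[OF finite_subset[OF A] finite_subset[OF B]] S by simp
  also have "\<dots> = n - 1"
    using card_eq_if_coeff_nonzero[OF assms(1) A B] assms(3) S by simp
  finally show ?thesis .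
qed

lemma degree_ext_eq:
  assumes "1 \<le> n" "in_alg {0, 1} n f" "f \<noteq> (\<lambda>_. 0)"
  shows "degree_ext f = n - 1"
proof -
  have "{card S | S. f S \<noteq> 0} = {n - 1}"
    using card_eq_if_nonzero[OF assms(1,2)] assms(3) by fastforce
  then show ?thesis
    unfolding degree_ext_def by simp
qed

end

theorem corollary2p4:
  fixes n :: nat
  assumes "n \<ge> 1"
  shows "(\<forall>f. in_alg {0} n f \<and> f \<in> T_space n \<and> antisymmetric n f \<and> f \<noteq> (\<lambda>_. 0)
            \<longrightarrow> degree_ext f = n - 1)
       \<and> (\<forall>f. in_alg {0, 1} n f \<and> f \<in> T_space n \<and> antisymmetric n f \<and> f \<noteq> (\<lambda>_. 0)
            \<longrightarrow> degree_ext f = n - 1)"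
proof -
  have "degree_ext f = n - 1"
    if "in_alg {0, 1} n f" "f \<in> T_space n" "antisymmetric n f" "f \<noteq> (\<lambda>_. 0)" for f
  proof -
    interpret antisymmetric_T_elem n f
      using that(2,3) by unfold_locales
    show ?thesis
      using assms that(1,4) by (rule degree_ext_eq)
  qed
  moreover have "in_alg {0} n f \<Longrightarrow> in_alg {0, 1} n f" for f
    by (rule in_alg_mono) auto
  ultimately show ?thesis
    by blast
qed

end
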